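(* Let $\mathbb{K}$ be a field of characteristic $2$, let $A$ be an associative commutative $\mathbb{K}$-algebra, and let $(A[[t]],\mu_t)$, $\mu_t(a,b)=ab+\sum_{i\ge1}t^i\mu_i(a,b)$, be a formal deformation of $A$ such that $\mu_1(a^2,b)=0$ and $\mu_2^-(a^2,b)=0$ for all $a,b\in A$. Then $(A,\cdot,\mu_1^-,\omega_{\mu_1})$ is a restricted Poisson algebra.
   Context: A formal deformation of $A$ is an associative $\mathbb{K}[[t]]$-bilinear product $\mu_t$ on $A[[t]]$ of the stated form with $\mu_i:A\times A\to A$ bilinear. For bilinear $\mu$: $\mu^-(a,b)=\mu(a,b)-\mu(b,a)$ and $\omega_\mu(a)=\mu(a,a)$. A restricted Poisson algebra (characteristic 2) is a commutative associative algebra $(A,\cdot)$ with a Lie bracket $\{,\}$ satisfying $\{ab,c\}=a\{b,c\}+b\{a,c\}$, and a map $(-)^{\{2\}}$ with $(\lambda x)^{\{2\}}=\lambda^2x^{\{2\}}$, $\mathrm{ad}_{x^{\{2\}}}=\mathrm{ad}_x^2$, $(x+y)^{\{2\}}=x^{\{2\}}+y^{\{2\}}+\{x,y\}$, and $(xy)^{\{2\}}=x^2y^{\{2\}}+y^2x^{\{2\}}+xy\{x,y\}$. *)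

theory Defs
  imports Complex_Main
begin

text \<open>A commutative associative K-algebra A is modelled by a type 'a of class comm_ring
  (commutative, associative, not necessarily unital) together with a scalar multiplication
  sc :: 'k \<Rightarrow> 'a \<Rightarrow> 'a over a field 'k making A a K-module and compatible with the product.\<close>

definition k_algebra :: "('k::field \<Rightarrow> 'a::comm_ring \<Rightarrow> 'a) \<Rightarrow> bool" where
  "k_algebra sc \<longleftrightarrow> module sc \<and>
     (\<forall>c x y. sc c (x * y) = sc c x * y \<and> sc c (x * y) = x * sc c y)"

definition bilinear_map :: "('k::field \<Rightarrow> 'a::comm_ring \<Rightarrow> 'a) \<Rightarrow> ('a \<Rightarrow> 'a \<Rightarrow> 'a) \<Rightarrow> bool" where
  "bilinear_map sc f \<longleftrightarrow>
     (\<forall>x y z. f (x + y) z = f x z + f y z) \<and>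
     (\<forall>x y z. f x (y + z) = f x y + f x z) \<and>
     (\<forall>c x y. f (sc c x) y = sc c (f x y)) \<and>
     (\<forall>c x y. f x (sc c y) = sc c (f x y))"

text \<open>Formal deformation: mu_t = sum_i t^i mu_i with mu_0 the product of A, each mu_i
  bilinear, and mu_t associative on A[[t]]. Since mu_t is the K[[t]]-bilinear extension,
  associativity is equivalent to the vanishing of every t^n coefficient of
  mu_t(mu_t(a,b),c) - mu_t(a,mu_t(b,c)) for a,b,c in A.\<close>
definition formal_deformation ::
    "('k::field \<Rightarrow> 'a::comm_ring \<Rightarrow> 'a) \<Rightarrow> (nat \<Rightarrow> 'a \<Rightarrow> 'a \<Rightarrow> 'a) \<Rightarrow> bool" where
  "formal_deformation sc \<mu> \<longleftrightarrow>
     (\<forall>a b. \<mu> 0 a b = a * b) \<and>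
     (\<forall>i. bilinear_map sc (\<mu> i)) \<and>
     (\<forall>n a b c. (\<Sum>i\<le>n. \<mu> i (\<mu> (n - i) a b) c) = (\<Sum>i\<le>n. \<mu> i a (\<mu> (n - i) b c)))"

definition antisymmetrization :: "('a::ab_group_add \<Rightarrow> 'a \<Rightarrow> 'a) \<Rightarrow> 'a \<Rightarrow> 'a \<Rightarrow> 'a" where
  "antisymmetrization m a b = m a b - m b a"

definition omega_of :: "('a \<Rightarrow> 'a \<Rightarrow> 'a) \<Rightarrow> 'a \<Rightarrow> 'a" where
  "omega_of m a = m a a"

definition lie_bracket :: "('k::field \<Rightarrow> 'a::comm_ring \<Rightarrow> 'a) \<Rightarrow> ('a \<Rightarrow> 'a \<Rightarrow> 'a) \<Rightarrow> bool" where
  "lie_bracket sc br \<longleftrightarrow> bilinear_map sc br \<and> (\<forall>x. br x x = 0) \<and>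
     (\<forall>x y z. br x (br y z) + br y (br z x) + br z (br x y) = 0)"

definition restricted_poisson ::
    "('k::field \<Rightarrow> 'a::comm_ring \<Rightarrow> 'a) \<Rightarrow> ('a \<Rightarrow> 'a \<Rightarrow> 'a) \<Rightarrow> ('a \<Rightarrow> 'a) \<Rightarrow> bool" where
  "restricted_poisson sc br sq \<longleftrightarrow>
     k_algebra sc \<and> lie_bracket sc br \<and>
     (\<forall>a b c. br (a * b) c = a * br b c + b * br a c) \<and>
     (\<forall>c x. sq (sc c x) = sc (c^2) (sq x)) \<and>
     (\<forall>x y. br (sq x) y = br x (br x y)) \<and>
     (\<forall>x y. sq (x + y) = sq x + sq y + br x y) \<and>
     (\<forall>x y. sq (x * y) = (x * x) * sq y + (y * y) * sq x + (x * y) * br x y)"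

end

theory Submission
  imports Defs
begin

text \<open>For every formal deformation of a commutative algebra the antisymmetrization of mu_1 is
  a Poisson bracket: the defects of the Leibniz rule and of the Jacobi identity are signed sums of
  the t^1 resp. t^2 coefficients of the associator of mu_t, which vanish. In characteristic 2 the
  same coefficients, taken at repeated arguments, also give the identities for the square map
  omega(a) = mu_1(a,a); what is left over there is mu_1(a^2,b) resp. the antisymmetrization of
  mu_2 at (a^2,b), and these are exactly the terms the hypotheses kill.\<close>

lemma bilinear_map_add_left: "bilinear_map sc f \<Longrightarrow> f (x + y) z = f x z + f y z"
  by (simp add: bilinear_map_def)

lemma bilinear_map_add_right: "bilinear_map sc f \<Longrightarrow> f x (y + z) = f x y + f x z"
  by (simp add: bilinear_map_def)

lemma bilinear_map_diff_left: "bilinear_map sc f \<Longrightarrow> f (x - y) z = f x z - f y z"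
  by (metis bilinear_map_add_left eq_diff_eq)

lemma bilinear_map_diff_right: "bilinear_map sc f \<Longrightarrow> f x (y - z) = f x y - f x z"
  by (metis bilinear_map_add_right eq_diff_eq)

lemma bilinear_map_antisymmetrization:
  assumes "module sc" and "bilinear_map sc f"
  shows "bilinear_map sc (antisymmetrization f)"
  using assms
  by (simp add: bilinear_map_def antisymmetrization_def module.scale_right_diff_distrib)

lemma omega_of_add:
  "bilinear_map sc f \<Longrightarrow> omega_of f (x + y) = omega_of f x + omega_of f y + (f x y + f y x)"
  by (simp add: omega_of_def bilinear_map_add_left bilinear_map_add_right algebra_simps)

lemma omega_of_scale:
  assumes "module sc" and "bilinear_map sc f"
  shows "omega_of f (sc c x) = sc (c\<^sup>2) (omega_of f x)"
  using assms by (simp add: omega_of_def bilinear_map_def module.scale_scale power2_eq_square)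

locale deformation = module sc for sc :: "'k::field \<Rightarrow> 'a::comm_ring \<Rightarrow> 'a" +
  fixes \<mu> :: "nat \<Rightarrow> 'a \<Rightarrow> 'a \<Rightarrow> 'a"
  assumes formal_deformation: "formal_deformation sc \<mu>"
begin

abbreviation bracket :: "'a \<Rightarrow> 'a \<Rightarrow> 'a" where
  "bracket \<equiv> antisymmetrization (\<mu> 1)"

definition associator_coeff :: "nat \<Rightarrow> 'a \<Rightarrow> 'a \<Rightarrow> 'a \<Rightarrow> 'a" where
  "associator_coeff n a b c =
     (\<Sum>i\<le>n. \<mu> i (\<mu> (n - i) a b) c) - (\<Sum>i\<le>n. \<mu> i a (\<mu> (n - i) b c))"

lemma associator_coeff_eq_0: "associator_coeff n a b c = 0"
  using formal_deformation by (simp add: formal_deformation_def associator_coeff_def)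

lemma mu_0: "\<mu> 0 a b = a * b"
  using formal_deformation by (simp add: formal_deformation_def)

lemma bilinear_mu: "bilinear_map sc (\<mu> i)"
  using formal_deformation by (simp add: formal_deformation_def)

lemmas mu_add_left = bilinear_map_add_left[OF bilinear_mu]
lemmas mu_add_right = bilinear_map_add_right[OF bilinear_mu]
lemmas mu_diff_left = bilinear_map_diff_left[OF bilinear_mu]
lemmas mu_diff_right = bilinear_map_diff_right[OF bilinear_mu]

lemma associator_coeff_1:
  "associator_coeff 1 a b c = \<mu> 1 a b * c + \<mu> 1 (a * b) c - (a * \<mu> 1 b c + \<mu> 1 a (b * c))"
  by (simp add: associator_coeff_def mu_0)

lemma associator_coeff_2:
  "associator_coeff 2 a b c = \<mu> 2 a b * c + \<mu> 1 (\<mu> 1 a b) c + \<mu> 2 (a * b) c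
     - (a * \<mu> 2 b c + \<mu> 1 a (\<mu> 1 b c) + \<mu> 2 a (b * c))"
  by (simp add: associator_coeff_def mu_0 numeral_2_eq_2 add.assoc)

lemma bracket_mult_left: "bracket (a * b) c = a * bracket b c + b * bracket a c"
proof -
  have "bracket (a * b) c - (a * bracket b c + b * bracket a c)
      = associator_coeff 1 a b c - associator_coeff 1 a c b + associator_coeff 1 c a b"
    unfolding associator_coeff_1 antisymmetrization_def by (simp add: algebra_simps)
  then show ?thesis by (simp add: associator_coeff_eq_0)
qed

lemma bracket_jacobi: "bracket x (bracket y z) + bracket y (bracket z x) + bracket z (bracket x y) = 0"
proof -
  have "bracket x (bracket y z) + bracket y (bracket z x) + bracket z (bracket x y)
      = associator_coeff 2 x z y + associator_coeff 2 y x z + associator_coeff 2 z y x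
        - associator_coeff 2 x y z - associator_coeff 2 y z x - associator_coeff 2 z x y"
    unfolding associator_coeff_2 antisymmetrization_def
    by (simp add: mu_diff_left mu_diff_right algebra_simps)
  then show ?thesis by (simp add: associator_coeff_eq_0)
qed

lemma lie_bracket_bracket: "lie_bracket sc bracket"
  unfolding lie_bracket_def
  using bilinear_map_antisymmetrization[OF module_axioms bilinear_mu] bracket_jacobi
  by (simp add: antisymmetrization_def)

end

locale char2_deformation =
  deformation sc \<mu> for sc :: "'k::field \<Rightarrow> 'a::comm_ring \<Rightarrow> 'a" and \<mu> +
  assumes CHAR_2: "CHAR('k) = 2"
begin

lemma add_self: "(x::'a) + x = 0"
proof -
  have "(1::'k) + 1 = 0"
    using of_nat_CHAR[where 'a='k] CHAR_2 by simp
  then have "sc 1 x + sc 1 x = 0"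
    by (metis scale_left_distrib scale_zero_left)
  then show ?thesis by simp
qed

lemma add_self_left: "(x::'a) + (x + y) = y"
  by (simp add: add.assoc[symmetric] add_self)

lemma diff_eq_add: "(x::'a) - y = x + y"
  by (metis add_diff_cancel_left' add_self_left diff_add_cancel)

lemma bracket_eq: "bracket x y = \<mu> 1 x y + \<mu> 1 y x"
  by (simp only: antisymmetrization_def diff_eq_add)

lemma omega_of_add_bracket:
  "omega_of (\<mu> 1) (x + y) = omega_of (\<mu> 1) x + omega_of (\<mu> 1) y + bracket x y"
  unfolding omega_of_add[OF bilinear_mu] bracket_eq ..

lemma omega_of_mult:
  assumes "\<forall>a b. \<mu> 1 (a * a) b = 0"
  shows "omega_of (\<mu> 1) (x * y)
    = x * x * omega_of (\<mu> 1) y + y * y * omega_of (\<mu> 1) x + x * y * bracket x y"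
proof -
  have "omega_of (\<mu> 1) (x * y)
        - (x * x * omega_of (\<mu> 1) y + y * y * omega_of (\<mu> 1) x + x * y * bracket x y)
      = associator_coeff 1 y y (x * x) + y * associator_coeff 1 y x x + associator_coeff 1 y x (x * y)
        + y * associator_coeff 1 x y x + \<mu> 1 (y * y) (x * x)"
    unfolding associator_coeff_1 bracket_eq omega_of_def
    by (simp add: diff_eq_add add_self add_self_left algebra_simps)
  with assms show ?thesis
    by (simp add: associator_coeff_eq_0)
qed

lemma bracket_omega_of_left:
  assumes "\<forall>a b. antisymmetrization (\<mu> 2) (a * a) b = 0"
  shows "bracket (omega_of (\<mu> 1) x) y = bracket x (bracket x y)"
proof -
  have "bracket (omega_of (\<mu> 1) x) y - bracket x (bracket x y)
      = associator_coeff 2 x x y + associator_coeff 2 x y x + associator_coeff 2 y x x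
        + antisymmetrization (\<mu> 2) (x * x) y"
    unfolding associator_coeff_2 bracket_eq omega_of_def antisymmetrization_def
    by (simp add: diff_eq_add add_self add_self_left mu_add_left mu_add_right
      algebra_simps)
  with assms show ?thesis
    by (simp add: associator_coeff_eq_0)
qed

end

theorem mainTheorem13:
  fixes sc :: "'k::field \<Rightarrow> 'a::comm_ring \<Rightarrow> 'a"
    and \<mu> :: "nat \<Rightarrow> 'a \<Rightarrow> 'a \<Rightarrow> 'a"
  assumes "CHAR('k) = 2"
    and "k_algebra sc"
    and "formal_deformation sc \<mu>"
    and "\<forall>a b. \<mu> 1 (a * a) b = 0"
    and "\<forall>a b. antisymmetrization (\<mu> 2) (a * a) b = 0"
  shows "restricted_poisson sc (antisymmetrization (\<mu> 1)) (omega_of (\<mu> 1))"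
proof -
  have "module sc"
    using \<open>k_algebra sc\<close> by (simp add: k_algebra_def)
  then interpret char2_deformation sc \<mu>
    using assms(1,3)
    by (simp add: char2_deformation_def char2_deformation_axioms_def deformation_def
        deformation_axioms_def)
  show ?thesis
    unfolding restricted_poisson_def
    using \<open>k_algebra sc\<close> lie_bracket_bracket bracket_mult_left
      omega_of_scale[OF \<open>module sc\<close> bilinear_mu] bracket_omega_of_left[OF assms(5)]
      omega_of_add_bracket omega_of_mult[OF assms(4)]
    by blast
qed

end
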